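(* Let $z_0, z_1, z_2, \ldots$ be independent standard normal random variables, and fix $L \in \mathbb{N}$. For each integer $N \ge L$, let $H_L = H_L(z)$ be the $L \times (N-L+1)$ Hankel matrix \[ H_L(z) = \begin{bmatrix} z_0 & z_1 & \cdots & z_{N-L} \\ z_1 & z_2 & \cdots & z_{N-L+1} \\ \vdots & \vdots & \ddots & \vdots \\ z_{L-1} & z_L & \cdots & z_{N-1} \end{bmatrix}, \] and let $\sigma_{\min}(H_L)$ denote its smallest singular value, i.e. the square root of the smallest eigenvalue of $H_L H_L^\top$. Then there exists a sequence of positive numbers $(\varepsilon_N)$ with $\varepsilon_N \to 0^+$ as $N \to \infty$ such that \[ \lim_{N\to\infty} \Pr\left( \frac{1}{\sigma_{\min}(H_L)} \le \varepsilon_N \right) = 1. \]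
   Context: $H_L(z)$ is the Hankel matrix of depth $L$ built from the first $N$ samples $z_0,\ldots,z_{N-1}$; it has $L$ rows and $N-L+1$ columns, with entry $(i,j)$ equal to $z_{i+j}$ for $0\le i\le L-1$, $0\le j\le N-L$. The convention $1/0=+\infty$ is used if $\sigma_{\min}(H_L)=0$. *)

theory Defs
  imports "HOL-Probability.Probability" "Jordan_Normal_Form.Char_Poly"
begin

definition hankel_mat :: "nat \<Rightarrow> nat \<Rightarrow> (nat \<Rightarrow> real) \<Rightarrow> real mat" where
  "hankel_mat L N z = mat L (N - L + 1) (\<lambda>(i, j). z (i + j))"

definition sigma_min :: "real mat \<Rightarrow> real" where
  "sigma_min H = sqrt (Min {e. eigenvalue (H * transpose_mat H) e})"

end

theory Submission
  imports Defs "HOL-Real_Asymp.Real_Asymp"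
begin

(* Let S = N - L + 1 be the number of columns.  The Gram matrix B = H H^T has entries
   B i k = (SUM j<S. z (i + j) * z (k + j)), so E (B i k) = S [i = k], and the fourth moments of
   independent standard normals give Var (B i k) <= 2 S.  By Chebyshev's inequality and a union
   bound over the L^2 entries, with probability at least 1 - 8 L^4 / S every entry of B lies within
   S / (2 L) of the corresponding entry of S I.  Gershgorin's theorem then puts every eigenvalue of B
   above S / 2, that is 1 / sigma_min H <= sqrt (2 / S), and sqrt (2 / S) tends to 0.
   The event is measurable because it says that the characteristic polynomial of B has no root
   in [0, 1 / eps^2), and roots of a continuous function can be detected on rational points. *)

section \<open>Eigenvalues of real matrices\<close>

lemma gershgorin:
  fixes A :: "'a :: linordered_field mat"
  assumes A: "A \<in> carrier_mat n n" and "eigenvalue A e"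
  shows "\<exists>i<n. \<bar>e - A $$ (i, i)\<bar> \<le> (\<Sum>k\<in>{..<n} - {i}. \<bar>A $$ (i, k)\<bar>)"
proof -
  obtain v where v: "v \<in> carrier_vec n" "v \<noteq> 0\<^sub>v n" "A *\<^sub>v v = e \<cdot>\<^sub>v v"
    using assms unfolding eigenvalue_def eigenvector_def by auto
  then have "n \<noteq> 0" by auto
  then obtain i where i: "i < n" and max: "\<And>k. k < n \<Longrightarrow> \<bar>v $ k\<bar> \<le> \<bar>v $ i\<bar>"
    using Max_in[of "(\<lambda>k. \<bar>v $ k\<bar>) ` {..<n}"] Max_ge[of "(\<lambda>k. \<bar>v $ k\<bar>) ` {..<n}"]
    by fastforce
  have "v $ i \<noteq> 0"
  proof
    assume "v $ i = 0"
    then have "v = 0\<^sub>v n" using v(1) max by (intro eq_vecI) force+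
    with v(2) show False ..
  qed
  have "(e - A $$ (i, i)) * v $ i = (\<Sum>k\<in>{..<n} - {i}. A $$ (i, k) * v $ k)"
  proof -
    have "e * v $ i = (\<Sum>k<n. A $$ (i, k) * v $ k)"
      using arg_cong[OF v(3), of "\<lambda>w. w $ i"] v(1) A i
      by (simp add: scalar_prod_def atLeast0LessThan)
    then show ?thesis using i by (simp add: sum.remove algebra_simps)
  qed
  then have "\<bar>e - A $$ (i, i)\<bar> * \<bar>v $ i\<bar> \<le> (\<Sum>k\<in>{..<n} - {i}. \<bar>A $$ (i, k)\<bar> * \<bar>v $ k\<bar>)"
    by (metis (no_types, lifting) abs_mult sum.cong sum_abs)
  also have "\<dots> \<le> (\<Sum>k\<in>{..<n} - {i}. \<bar>A $$ (i, k)\<bar>) * \<bar>v $ i\<bar>"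
    unfolding sum_distrib_right by (intro sum_mono mult_left_mono max) auto
  finally show ?thesis
    using i \<open>v $ i \<noteq> 0\<close> by (intro exI[of _ i]) simp
qed

lemma finite_eigenvalues:
  fixes A :: "'a :: field mat"
  assumes "A \<in> carrier_mat n n"
  shows "finite {e. eigenvalue A e}"
proof -
  have "char_poly A \<noteq> 0" using degree_monic_char_poly[OF assms] by auto
  then show ?thesis using poly_roots_finite eigenvalue_root_char_poly[OF assms] by simp
qed

lemma conjugate_map_mat_of_real_mult_mat_vec:
  fixes A :: "real mat"
  assumes "A \<in> carrier_mat n m" "v \<in> carrier_vec m"
  shows "conjugate (map_mat complex_of_real A *\<^sub>v v) = map_mat complex_of_real A *\<^sub>v conjugate v"
  using assms by (intro eq_vecI) (auto simp: scalar_prod_def)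

(* A complex eigenvalue l with eigenvector v is real: conj v . A v equals both cnj l |v|^2 and l |v|^2. *)
lemma symmetric_real_mat_has_eigenvalue:
  fixes A :: "real mat"
  assumes A: "A \<in> carrier_mat n n" and sym: "transpose_mat A = A" and "n > 0"
  shows "\<exists>e. eigenvalue A e"
proof -
  define Ac where "Ac = map_mat complex_of_real A"
  have Ac: "Ac \<in> carrier_mat n n" using A by (simp add: Ac_def)
  have "degree (char_poly Ac) = n" using degree_monic_char_poly[OF Ac] by simp
  then obtain l where "poly (char_poly Ac) l = 0"
    using fundamental_theorem_of_algebra constant_degree \<open>n > 0\<close> by (metis not_gr0)
  then obtain v where v: "v \<in> carrier_vec n" "v \<noteq> 0\<^sub>v n" "Ac *\<^sub>v v = l \<cdot>\<^sub>v v"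
    using eigenvalue_root_char_poly[OF Ac] Ac unfolding eigenvalue_def eigenvector_def by auto
  have "Ac *\<^sub>v conjugate v = conjugate (Ac *\<^sub>v v)"
    using conjugate_map_mat_of_real_mult_mat_vec[OF A v(1)] by (simp add: Ac_def)
  also have "\<dots> = cnj l \<cdot>\<^sub>v conjugate v"
    using v(3) by (simp add: conjugate_smult_vec)
  finally have conj_eigen: "Ac *\<^sub>v conjugate v = cnj l \<cdot>\<^sub>v conjugate v" .
  have "transpose_mat Ac = Ac"
    using sym by (simp add: Ac_def map_mat_transpose)
  then have "cnj l * (conjugate v \<bullet> v) = conjugate v \<bullet> (Ac *\<^sub>v v)"
    using transpose_vec_mult_scalar[OF Ac v(1), of "conjugate v"] conj_eigen v(1)
    by (simp add: smult_scalar_prod_distrib)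
  also have "\<dots> = l * (conjugate v \<bullet> v)"
    using v(1,3) by (simp add: scalar_prod_smult_distrib)
  finally have "cnj l * (conjugate v \<bullet> v) = l * (conjugate v \<bullet> v)" .
  moreover have "conjugate v \<bullet> v \<noteq> 0"
    using v conjugate_square_greater_0_vec[OF v(1)] conjugate_vec_sprod_comm[OF v(1) v(1)] by auto
  ultimately have "cnj l = l" by simp
  then have "l = of_real (Re l)" by (simp add: complex_eq_iff)
  then have "poly (char_poly A) (Re l) = 0"
    using \<open>poly (char_poly Ac) l = 0\<close> of_real_hom.char_poly_hom[OF A]
    by (metis Ac_def of_real_eq_0_iff of_real_hom.poly_map_poly)
  then show ?thesis using eigenvalue_root_char_poly[OF A] by blast
qed

lemma index_mult_transpose_mat_self:
  assumes "H \<in> carrier_mat n m" "i < n" "k < n"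
  shows "(H * transpose_mat H) $$ (i, k) = (\<Sum>j<m. H $$ (i, j) * H $$ (k, j))"
  using assms by (simp add: scalar_prod_def atLeast0LessThan)

lemma eigenvalue_mult_transpose_mat_self_nonneg:
  fixes H :: "real mat"
  assumes H: "H \<in> carrier_mat n m" and "eigenvalue (H * transpose_mat H) e"
  shows "0 \<le> e"
proof -
  obtain v where v: "v \<in> carrier_vec n" "v \<noteq> 0\<^sub>v n" "(H * transpose_mat H) *\<^sub>v v = e \<cdot>\<^sub>v v"
    using assms unfolding eigenvalue_def eigenvector_def by auto
  have "e * (v \<bullet> v) = v \<bullet> ((H * transpose_mat H) *\<^sub>v v)"
    using v by simp
  also have "\<dots> = (transpose_mat H *\<^sub>v v) \<bullet> (transpose_mat H *\<^sub>v v)"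
    using transpose_vec_mult_scalar[OF H, of "transpose_mat H *\<^sub>v v" v] v H by simp
  finally have "0 \<le> e * (v \<bullet> v)"
    using conjugate_square_ge_0_vec[of "transpose_mat H *\<^sub>v v"] by simp
  moreover have "0 < v \<bullet> v"
    using conjugate_square_greater_0_vec[OF v(1)] v(2) by simp
  ultimately show ?thesis by (simp add: zero_le_mult_iff)
qed

lemma eigenvalue_ge_if_near_scalar:
  fixes A :: "'a :: linordered_field mat"
  assumes A: "A \<in> carrier_mat n n" and e: "eigenvalue A e"
    and near: "\<And>i k. i < n \<Longrightarrow> k < n \<Longrightarrow> \<bar>A $$ (i, k) - c * of_bool (i = k)\<bar> \<le> t"
  shows "c - of_nat n * t \<le> e"
proof -
  obtain i where i: "i < n" and disc: "\<bar>e - A $$ (i, i)\<bar> \<le> (\<Sum>k\<in>{..<n} - {i}. \<bar>A $$ (i, k)\<bar>)"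
    using gershgorin[OF A e] by blast
  have "(\<Sum>k\<in>{..<n} - {i}. \<bar>A $$ (i, k)\<bar>) \<le> (\<Sum>k\<in>{..<n} - {i}. t)"
  proof (intro sum_mono)
    show "\<bar>A $$ (i, k)\<bar> \<le> t" if "k \<in> {..<n} - {i}" for k
      using near[of i k] i that by auto
  qed
  also have "\<dots> = of_nat n * t - t"
    using i by (simp add: of_nat_diff algebra_simps)
  finally have "\<bar>e - A $$ (i, i)\<bar> \<le> of_nat n * t - t"
    using disc by linarith
  moreover have "\<bar>A $$ (i, i) - c\<bar> \<le> t"
    using near[OF i i] by simp
  ultimately show ?thesis by linarith
qed

section \<open>The smallest singular value\<close>

lemma inverse_sqrt_le_iff:
  fixes \<mu> \<epsilon> :: real
  assumes "0 \<le> \<mu>" "0 < \<epsilon>"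
  shows "sqrt \<mu> \<noteq> 0 \<and> 1 / sqrt \<mu> \<le> \<epsilon> \<longleftrightarrow> 1 / \<epsilon>\<^sup>2 \<le> \<mu>"
proof -
  have "sqrt \<mu> \<noteq> 0 \<and> 1 / sqrt \<mu> \<le> \<epsilon> \<longleftrightarrow> 1 / \<epsilon> \<le> sqrt \<mu>"
  proof (cases "\<mu> = 0")
    case False
    then have "0 < sqrt \<mu>" using assms by simp
    then show ?thesis using assms by (simp add: field_simps)
  qed (use assms in simp)
  also have "\<dots> \<longleftrightarrow> 1 / \<epsilon>\<^sup>2 \<le> \<mu>"
    using assms
    by (metis divide_nonneg_pos le_numeral_extra(1) power_one_over real_sqrt_le_iff real_sqrt_unique)
  finally show ?thesis .
qed

lemma sigma_min_inverse_le_iff: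
  assumes H: "H \<in> carrier_mat n m" and "0 < n" "0 < \<epsilon>"
  shows "sigma_min H \<noteq> 0 \<and> 1 / sigma_min H \<le> \<epsilon> \<longleftrightarrow>
    (\<forall>e. eigenvalue (H * transpose_mat H) e \<longrightarrow> 1 / \<epsilon>\<^sup>2 \<le> e)"
proof -
  let ?E = "{e. eigenvalue (H * transpose_mat H) e}"
  \<comment> \<open>\<open>sigma_min\<close> is defined through \<open>Min\<close>, which is meaningless unless \<open>?E\<close> is finite and nonempty.\<close>
  have B: "H * transpose_mat H \<in> carrier_mat n n" using H by simp
  have fin: "finite ?E" by (rule finite_eigenvalues[OF B])
  have "transpose_mat (H * transpose_mat H) = H * transpose_mat H"
    using H by (simp add: transpose_mult)
  then have ne: "?E \<noteq> {}"
    using symmetric_real_mat_has_eigenvalue[OF B _ \<open>0 < n\<close>] by simp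
  have "0 \<le> Min ?E"
    using Min_in[OF fin ne] eigenvalue_mult_transpose_mat_self_nonneg[OF H] by simp
  then have "sigma_min H \<noteq> 0 \<and> 1 / sigma_min H \<le> \<epsilon> \<longleftrightarrow> 1 / \<epsilon>\<^sup>2 \<le> Min ?E"
    unfolding sigma_min_def using inverse_sqrt_le_iff \<open>0 < \<epsilon>\<close> by blast
  also have "\<dots> \<longleftrightarrow> (\<forall>e\<in>?E. 1 / \<epsilon>\<^sup>2 \<le> e)"
    using fin ne by (rule Min_ge_iff)
  finally show ?thesis by simp
qed

lemma eigenvalues_mult_transpose_mat_self_ge_iff:
  fixes H :: "real mat"
  assumes H: "H \<in> carrier_mat n m"
  shows "(\<forall>e. eigenvalue (H * transpose_mat H) e \<longrightarrow> c \<le> e) \<longleftrightarrow>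
    \<not> (\<exists>e\<in>{0..<c}. poly (char_poly (H * transpose_mat H)) e = 0)"
  using eigenvalue_root_char_poly[of "H * transpose_mat H" n] H
    eigenvalue_mult_transpose_mat_self_nonneg[OF H]
  by (auto simp: not_le)

section \<open>Measurability of root events\<close>

lemma borel_measurable_det:
  fixes A :: "'b \<Rightarrow> real mat"
  assumes "\<And>\<omega>. A \<omega> \<in> carrier_mat n n"
    and "\<And>i j. i < n \<Longrightarrow> j < n \<Longrightarrow> (\<lambda>\<omega>. A \<omega> $$ (i, j)) \<in> borel_measurable M"
  shows "(\<lambda>\<omega>. det (A \<omega>)) \<in> borel_measurable M"
proof -
  have "det (A \<omega>) = (\<Sum>p\<in>{p. p permutes {0..<n}}. signof p * (\<Prod>i=0..<n. A \<omega> $$ (i, p i)))" for \<omega>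
    using assms(1)[of \<omega>] by (simp add: det_def)
  moreover have "(\<lambda>\<omega>. \<Sum>p\<in>{p. p permutes {0..<n}}. signof p * (\<Prod>i=0..<n. A \<omega> $$ (i, p i)))
      \<in> borel_measurable M"
    by (auto intro!: borel_measurable_sum borel_measurable_times borel_measurable_prod assms(2)
        simp: permutes_in_image)
  ultimately show ?thesis by simp
qed

lemma borel_measurable_poly_char_poly:
  fixes A :: "'b \<Rightarrow> real mat"
  assumes "\<And>\<omega>. A \<omega> \<in> carrier_mat n n"
    and "\<And>i j. i < n \<Longrightarrow> j < n \<Longrightarrow> (\<lambda>\<omega>. A \<omega> $$ (i, j)) \<in> borel_measurable M"
  shows "(\<lambda>\<omega>. poly (char_poly (A \<omega>)) x) \<in> borel_measurable M"
  unfolding char_poly_matrix[OF assms(1)]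
proof (rule borel_measurable_det)
  show "- char_matrix (A \<omega>) x \<in> carrier_mat n n" for \<omega>
    using assms(1) by simp
  show "(\<lambda>\<omega>. (- char_matrix (A \<omega>) x) $$ (i, j)) \<in> borel_measurable M" if "i < n" "j < n" for i j
  proof -
    have "(- char_matrix (A \<omega>) x) $$ (i, j) = (if i = j then x else 0) - A \<omega> $$ (i, j)" for \<omega>
      using assms(1)[of \<omega>] that by (auto simp: char_matrix_def)
    then show ?thesis using assms(2)[OF that] by simp
  qed
qed

lemma compact_has_zero_if_approx_zeros:
  fixes f :: "'a::metric_space \<Rightarrow> real"
  assumes "compact K" "continuous_on K f" "\<And>m::nat. \<exists>x\<in>K. \<bar>f x\<bar> < 1 / Suc m"
  shows "\<exists>x\<in>K. f x = 0"
proof -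
  have "K \<noteq> {}" using assms(3)[of 0] by auto
  then obtain x where x: "x \<in> K" "\<And>y. y \<in> K \<Longrightarrow> \<bar>f x\<bar> \<le> \<bar>f y\<bar>"
    using continuous_attains_inf[OF assms(1) _ continuous_on_rabs[OF assms(2)]] by blast
  have "f x = 0"
  proof (rule ccontr)
    assume "f x \<noteq> 0"
    then obtain m :: nat where "inverse (Suc m) < \<bar>f x\<bar>"
      using reals_Archimedean[of "\<bar>f x\<bar>"] by auto
    moreover obtain y where "y \<in> K" "\<bar>f y\<bar> < 1 / Suc m" using assms(3) by blast
    ultimately show False using x(2) by (force simp: inverse_eq_divide)
  qed
  with x show ?thesis by blast
qed

lemma rat_near_zero:
  fixes f :: "real \<Rightarrow> real"
  assumes "isCont f e" "f e = 0" "e < c" "0 < \<delta>"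
  shows "\<exists>q::rat. e < of_rat q \<and> of_rat q < c \<and> \<bar>f (of_rat q)\<bar> < \<delta>"
proof -
  obtain d where d: "d > 0" "\<And>y. dist y e < d \<Longrightarrow> dist (f y) (f e) < \<delta>"
    using assms(1,4) unfolding continuous_at_eps_delta by blast
  have "e < min (e + d) c" using d(1) assms(3) by simp
  then obtain r where "r \<in> \<rat>" "e < r" "r < min (e + d) c"
    using Rats_dense_in_real by blast
  with d assms(2) show ?thesis
    by (elim Rats_cases) (auto simp: dist_real_def)
qed

lemma ex_root_atLeastLessThan_iff_rat:
  fixes f :: "real \<Rightarrow> real"
  assumes f: "continuous_on UNIV f"
  shows "(\<exists>e\<in>{a..<b}. f e = 0) \<longleftrightarrow>
    (\<exists>n::nat. \<forall>m::nat. \<exists>q::rat. a \<le> of_rat q \<and> of_rat q \<le> b - 1 / Suc n \<and>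
      \<bar>f (of_rat q)\<bar> < 1 / Suc m)"
proof
  assume "\<exists>e\<in>{a..<b}. f e = 0"
  then obtain e where e: "a \<le> e" "e < b" "f e = 0" by auto
  obtain n :: nat where n: "inverse (Suc n) < b - e"
    using reals_Archimedean[of "b - e"] e(2) by auto
  have "\<exists>q::rat. a \<le> of_rat q \<and> of_rat q \<le> b - 1 / Suc n \<and> \<bar>f (of_rat q)\<bar> < 1 / Suc m" for m
  proof -
    obtain q :: rat where "e < of_rat q" "of_rat q < b - 1 / Suc n" "\<bar>f (of_rat q)\<bar> < 1 / Suc m"
      using rat_near_zero[where f = f and e = e and c = "b - 1 / Suc n" and \<delta> = "1 / Suc m"] f e n
      by (auto simp: continuous_on_eq_continuous_at inverse_eq_divide)
    with e(1) show ?thesis by (intro exI[of _ q]) auto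
  qed
  then show "\<exists>n::nat. \<forall>m::nat. \<exists>q::rat. a \<le> of_rat q \<and> of_rat q \<le> b - 1 / Suc n \<and>
      \<bar>f (of_rat q)\<bar> < 1 / Suc m" by blast
next
  assume "\<exists>n::nat. \<forall>m::nat. \<exists>q::rat. a \<le> of_rat q \<and> of_rat q \<le> b - 1 / Suc n \<and>
      \<bar>f (of_rat q)\<bar> < 1 / Suc m"
  then obtain n :: nat where "\<And>m::nat. \<exists>x\<in>{a..b - 1 / Suc n}. \<bar>f x\<bar> < 1 / Suc m"
    by fastforce
  then have "\<exists>e\<in>{a..b - 1 / Suc n}. f e = 0"
    using f by (intro compact_has_zero_if_approx_zeros) (auto intro: continuous_on_subset)
  moreover have "b - 1 / Suc n < b" by simp
  ultimately show "\<exists>e\<in>{a..<b}. f e = 0"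
    by (metis atLeastAtMost_iff atLeastLessThan_iff order_le_less_trans)
qed

lemma sets_ex_root_atLeastLessThan:
  fixes f :: "'b \<Rightarrow> real \<Rightarrow> real"
  assumes "\<And>\<omega>. continuous_on UNIV (f \<omega>)"
    and [measurable]: "\<And>x. (\<lambda>\<omega>. f \<omega> x) \<in> borel_measurable M"
  shows "{\<omega> \<in> space M. \<exists>e\<in>{a..<b}. f \<omega> e = 0} \<in> sets M"
proof -
  have "{\<omega> \<in> space M. \<exists>e\<in>{a..<b}. f \<omega> e = 0} =
    {\<omega> \<in> space M. \<exists>n::nat. \<forall>m::nat. \<exists>q::rat. a \<le> of_rat q \<and> of_rat q \<le> b - 1 / Suc n \<and>
      \<bar>f \<omega> (of_rat q)\<bar> < 1 / Suc m}"
    using ex_root_atLeastLessThan_iff_rat[OF assms(1)] by blast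
  also have "\<dots> \<in> sets M" by measurable
  finally show ?thesis .
qed

section \<open>The Gram matrix of a Hankel matrix\<close>

definition hankel_gram :: "nat \<Rightarrow> (nat \<Rightarrow> real) \<Rightarrow> nat \<Rightarrow> nat \<Rightarrow> real" where
  "hankel_gram S x i k = (\<Sum>j<S. x (i + j) * x (k + j))"

lemma hankel_mat_carrier: "hankel_mat L N x \<in> carrier_mat L (N - L + 1)"
  by (simp add: hankel_mat_def)

lemma index_hankel_mat_mult_transpose:
  assumes "i < L" "k < L"
  shows "(hankel_mat L N x * transpose_mat (hankel_mat L N x)) $$ (i, k) = hankel_gram (N - L + 1) x i k"
  using assms
  by (subst index_mult_transpose_mat_self[OF hankel_mat_carrier])
    (auto simp: hankel_mat_def hankel_gram_def intro!: sum.cong)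

lemma hankel_sigma_min_inverse_le_if_gram_near:
  fixes L N :: nat and x :: "nat \<Rightarrow> real"
  defines "S \<equiv> N - L + 1"
  assumes "0 < L"
    and near: "\<And>i k. i < L \<Longrightarrow> k < L \<Longrightarrow>
      \<bar>hankel_gram S x i k - real S * of_bool (i = k)\<bar> \<le> real S / (2 * real L)"
  shows "sigma_min (hankel_mat L N x) \<noteq> 0 \<and> 1 / sigma_min (hankel_mat L N x) \<le> sqrt (2 / real S)"
proof -
  let ?H = "hankel_mat L N x"
  have H: "?H \<in> carrier_mat L S" unfolding S_def by (rule hankel_mat_carrier)
  have "real S / 2 \<le> e" if "eigenvalue (?H * transpose_mat ?H) e" for e
  proof -
    have B: "?H * transpose_mat ?H \<in> carrier_mat L L" using H by simp
    have near_B: "\<bar>(?H * transpose_mat ?H) $$ (i, k) - real S * of_bool (i = k)\<bar> \<le> real S / (2 * real L)"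
      if "i < L" "k < L" for i k
      using near[OF that] unfolding index_hankel_mat_mult_transpose[OF that] S_def .
    have "real S - real L * (real S / (2 * real L)) \<le> e"
      by (rule eigenvalue_ge_if_near_scalar[OF B that near_B])
    then show ?thesis using \<open>0 < L\<close> by simp
  qed
  moreover have "1 / (sqrt (2 / real S))\<^sup>2 = real S / 2" by simp
  ultimately show ?thesis
    using sigma_min_inverse_le_iff[OF H \<open>0 < L\<close>, of "sqrt (2 / real S)"] by (simp add: S_def)
qed

section \<open>Moments of independent standard normals\<close>

definition std_normal_moment :: "nat \<Rightarrow> real" where
  "std_normal_moment k = (LINT x|lborel. std_normal_density x * x ^ k)"

lemma integrable_std_normal_moment: "integrable lborel (\<lambda>x. std_normal_density x * x ^ k)"
proof (cases "even k")
  case True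
  then obtain j where "k = 2 * j" by blast
  then show ?thesis using integrable.intros[OF std_normal_moment_even[of j]] by simp
next
  case False
  then obtain j where "k = 2 * j + 1" using oddE by blast
  then show ?thesis using integrable.intros[OF std_normal_moment_odd[of j]] by simp
qed

lemma std_normal_moment_0 [simp]: "std_normal_moment 0 = 1"
  and std_normal_moment_1 [simp]: "std_normal_moment (Suc 0) = 0"
  using integral_std_normal_moment_even[of 0] integral_std_normal_moment_odd[of 0]
  by (simp_all add: std_normal_moment_def)

lemma std_normal_moment_Suc_Suc [simp]:
  "std_normal_moment (Suc (Suc k)) = (k + 1) * std_normal_moment k"
proof (cases "even k")
  case True
  then obtain j where k: "k = 2 * j" by blast
  have "fact (2 * j + 2) = (2 * (j + 1)) * ((2 * j + 1) * (fact (2 * j) :: real))"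
    by (simp add: algebra_simps)
  moreover have "2 ^ (j + 1) * fact (j + 1) = (2 * (j + 1)) * (2 ^ j * fact j :: real)"
    by (simp add: algebra_simps)
  ultimately have "fact (2 * j + 2) / (2 ^ (j + 1) * fact (j + 1)) =
      (2 * j + 1) * (fact (2 * j) / (2 ^ j * fact j) :: real)"
    by (simp only: mult_divide_mult_cancel_left_if) simp
  then show ?thesis
    using integral_std_normal_moment_even[of j] integral_std_normal_moment_even[of "j + 1"]
    by (simp add: std_normal_moment_def k)
next
  case False
  then obtain j where k: "k = 2 * j + 1" using oddE by blast
  show ?thesis
    using integral_std_normal_moment_odd[of j] integral_std_normal_moment_odd[of "j + 1"]
    by (simp add: std_normal_moment_def k)
qed

locale iid_std_normal = prob_space M for M :: "'a measure" +
  fixes z :: "nat \<Rightarrow> 'a \<Rightarrow> real"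
  assumes indep: "indep_vars (\<lambda>_. borel) z UNIV"
    and std_normal: "\<And>i. distributed M lborel (z i) std_normal_density"
begin

lemma borel_measurable_z[measurable]: "z i \<in> borel_measurable M"
  using distributed_measurable[OF std_normal] by simp

lemma integrable_power: "integrable M (\<lambda>\<omega>. z i \<omega> ^ k)"
  using distributed_integrable[OF std_normal, of "\<lambda>x. x ^ k"] integrable_std_normal_moment
  by simp

lemma expectation_power: "expectation (\<lambda>\<omega>. z i \<omega> ^ k) = std_normal_moment k"
  using distributed_integral[OF std_normal, of "\<lambda>x. x ^ k"] by (simp add: std_normal_moment_def)

lemma
  shows expectation_prod_mset:
    "expectation (\<lambda>\<omega>. \<Prod>i\<in>#A. z i \<omega>) = (\<Prod>i\<in>set_mset A. std_normal_moment (count A i))"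
    and integrable_prod_mset: "integrable M (\<lambda>\<omega>. \<Prod>i\<in>#A. z i \<omega>)"
proof -
  have "indep_vars (\<lambda>_. borel) (\<lambda>i \<omega>. z i \<omega> ^ count A i) (set_mset A)"
    by (rule indep_vars_compose2[OF indep_vars_subset[OF indep]]) auto
  from indep_vars_lebesgue_integral[OF _ this] indep_vars_integrable[OF _ this]
  show "expectation (\<lambda>\<omega>. \<Prod>i\<in>#A. z i \<omega>) = (\<Prod>i\<in>set_mset A. std_normal_moment (count A i))"
    and "integrable M (\<lambda>\<omega>. \<Prod>i\<in>#A. z i \<omega>)"
    by (simp_all add: image_prod_mset_multiplicity integrable_power expectation_power)
qed

lemma expectation_mult2: "expectation (\<lambda>\<omega>. z p \<omega> * z q \<omega>) = of_bool (p = q)"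
  using expectation_prod_mset[of "{#p, q#}"]
  by (cases "p = q") (simp_all add: insert_commute)

lemma integrable_mult2: "integrable M (\<lambda>\<omega>. z p \<omega> * z q \<omega>)"
  using integrable_prod_mset[of "{#p, q#}"] by simp

lemma expectation_mult4:
  "expectation (\<lambda>\<omega>. z p \<omega> * z q \<omega> * (z r \<omega> * z s \<omega>)) =
     of_bool (p = q \<and> r = s) + of_bool (p = r \<and> q = s) + of_bool (p = s \<and> q = r)"
  using expectation_prod_mset[of "{#p, q, r, s#}"]
  by (cases "p = q"; cases "p = r"; cases "p = s"; cases "q = r"; cases "q = s"; cases "r = s")
    (simp_all add: insert_commute mult_ac)

lemma integrable_mult4: "integrable M (\<lambda>\<omega>. z p \<omega> * z q \<omega> * (z r \<omega> * z s \<omega>))"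
  using integrable_prod_mset[of "{#p, q, r, s#}"] by (simp add: mult_ac)

subsection \<open>Concentration of the Gram matrix\<close>

lemma borel_measurable_hankel_gram [measurable]:
  "(\<lambda>\<omega>. hankel_gram S (\<lambda>n. z n \<omega>) i k) \<in> borel_measurable M"
  unfolding hankel_gram_def by measurable

lemma
  shows expectation_hankel_gram:
    "expectation (\<lambda>\<omega>. hankel_gram S (\<lambda>n. z n \<omega>) i k) = real S * of_bool (i = k)"
    and integrable_hankel_gram: "integrable M (\<lambda>\<omega>. hankel_gram S (\<lambda>n. z n \<omega>) i k)"
  unfolding hankel_gram_def by (simp_all add: expectation_mult2 integrable_mult2)

lemma
  shows expectation_hankel_gram_sq:
    "expectation (\<lambda>\<omega>. (hankel_gram S (\<lambda>n. z n \<omega>) i k)\<^sup>2) =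
       real S * (real S * of_bool (i = k) + (1 + of_bool (i = k)))"
    and integrable_hankel_gram_sq: "integrable M (\<lambda>\<omega>. (hankel_gram S (\<lambda>n. z n \<omega>) i k)\<^sup>2)"
proof -
  have sq: "(hankel_gram S (\<lambda>n. z n \<omega>) i k)\<^sup>2 =
      (\<Sum>j<S. \<Sum>j'<S. z (i + j) \<omega> * z (k + j) \<omega> * (z (i + j') \<omega> * z (k + j') \<omega>))" for \<omega>
    unfolding hankel_gram_def power2_eq_square sum_product ..
  have crossed: "(i + j = k + j' \<and> k + j = i + j') \<longleftrightarrow> (i = k \<and> j = j')" for j j' :: nat
    by arith
  have diagonal: "(\<Sum>j<S. \<Sum>j'<S. c + d * of_bool (j = j')) = real S * (real S * c + d)" for c d :: real
  proof -
    have "(\<Sum>j'<S. c + d * of_bool (j = j')) = real S * c + d" if "j < S" for j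
      using that by (simp add: sum.distrib sum_distrib_left[symmetric])
    then show ?thesis by simp
  qed
  have "expectation (\<lambda>\<omega>. (hankel_gram S (\<lambda>n. z n \<omega>) i k)\<^sup>2) =
      (\<Sum>j<S. \<Sum>j'<S. of_bool (i = k) + of_bool (j = j') + of_bool (i = k) * of_bool (j = j'))"
    unfolding sq by (simp add: expectation_mult4 integrable_mult4 crossed)
  also have "\<dots> = (\<Sum>j<S. \<Sum>j'<S. of_bool (i = k) + (1 + of_bool (i = k)) * of_bool (j = j'))"
    by (simp only: distrib_right mult_1_left add.assoc)
  finally show "expectation (\<lambda>\<omega>. (hankel_gram S (\<lambda>n. z n \<omega>) i k)\<^sup>2) =
       real S * (real S * of_bool (i = k) + (1 + of_bool (i = k)))"
    by (simp only: diagonal)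
  show "integrable M (\<lambda>\<omega>. (hankel_gram S (\<lambda>n. z n \<omega>) i k)\<^sup>2)"
    unfolding sq by (simp add: integrable_mult4)
qed

lemma prob_hankel_gram_deviation:
  assumes "0 < t"
  shows "prob {\<omega> \<in> space M. t \<le> \<bar>hankel_gram S (\<lambda>n. z n \<omega>) i k - real S * of_bool (i = k)\<bar>}
    \<le> 2 * real S / t\<^sup>2"
proof -
  let ?X = "\<lambda>\<omega>. hankel_gram S (\<lambda>n. z n \<omega>) i k"
  have "variance ?X = expectation (\<lambda>\<omega>. (?X \<omega>)\<^sup>2) - (expectation ?X)\<^sup>2"
    using integrable_hankel_gram[of S i k] integrable_hankel_gram_sq[of S i k] by (rule variance_eq)
  also have "\<dots> = real S * (1 + of_bool (i = k))"
    unfolding expectation_hankel_gram expectation_hankel_gram_sq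
    by (cases "i = k") (simp_all add: power2_eq_square algebra_simps)
  finally have "variance ?X \<le> 2 * real S" by simp
  have "prob {\<omega> \<in> space M. t \<le> \<bar>?X \<omega> - real S * of_bool (i = k)\<bar>} \<le> variance ?X / t\<^sup>2"
    using Chebyshev_inequality[of ?X t] integrable_hankel_gram_sq assms
    by (simp add: expectation_hankel_gram)
  also have "\<dots> \<le> 2 * real S / t\<^sup>2"
    using \<open>variance ?X \<le> 2 * real S\<close> by (simp add: divide_right_mono)
  finally show ?thesis .
qed

lemma prob_hankel_gram_near_scalar:
  assumes "0 < t"
  shows "1 - (real L)\<^sup>2 * (2 * real S / t\<^sup>2) \<le>
    prob {\<omega> \<in> space M. \<forall>i<L. \<forall>k<L. \<bar>hankel_gram S (\<lambda>n. z n \<omega>) i k - real S * of_bool (i = k)\<bar> < t}"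
proof -
  define near where "near \<omega> i k \<longleftrightarrow>
    \<bar>hankel_gram S (\<lambda>n. z n \<omega>) i k - real S * of_bool (i = k)\<bar> < t" for \<omega> i k
  define G where "G = {\<omega> \<in> space M. \<forall>i<L. \<forall>k<L. near \<omega> i k}"
  have [measurable]: "Measurable.pred M (\<lambda>\<omega>. near \<omega> i k)" for i k
    unfolding near_def by measurable
  have "prob (space M - G) = prob (\<Union>(i, k)\<in>{..<L} \<times> {..<L}. {\<omega> \<in> space M. \<not> near \<omega> i k})"
    by (rule arg_cong[where f = prob]) (auto simp: G_def)
  also have "\<dots> \<le> (\<Sum>(i, k)\<in>{..<L} \<times> {..<L}. prob {\<omega> \<in> space M. \<not> near \<omega> i k})"
    using measure_UNION_le[of "{..<L} \<times> {..<L}" "\<lambda>(i, k). {\<omega> \<in> space M. \<not> near \<omega> i k}"]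
    by (simp add: split_beta)
  also have "\<dots> \<le> (\<Sum>(i, k)\<in>{..<L} \<times> {..<L}. 2 * real S / t\<^sup>2)"
  proof (intro sum_mono, clarify)
    show "prob {\<omega> \<in> space M. \<not> near \<omega> i k} \<le> 2 * real S / t\<^sup>2" for i k
      unfolding near_def not_less by (rule prob_hankel_gram_deviation[OF assms])
  qed
  also have "\<dots> = (real L)\<^sup>2 * (2 * real S / t\<^sup>2)"
    by (simp add: power2_eq_square)
  finally have "1 - (real L)\<^sup>2 * (2 * real S / t\<^sup>2) \<le> prob G"
    using prob_compl[of G] by (simp add: G_def)
  then show ?thesis
    by (simp only: G_def near_def)
qed

lemma sets_hankel_sigma_min_event:
  assumes "0 < L" "0 < \<epsilon>"
  shows "{\<omega> \<in> space M. sigma_min (hankel_mat L N (\<lambda>n. z n \<omega>)) \<noteq> 0 \<and>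
      1 / sigma_min (hankel_mat L N (\<lambda>n. z n \<omega>)) \<le> \<epsilon>} \<in> sets M"
proof -
  let ?B = "\<lambda>\<omega>. hankel_mat L N (\<lambda>n. z n \<omega>) * transpose_mat (hankel_mat L N (\<lambda>n. z n \<omega>))"
  have "{\<omega> \<in> space M. sigma_min (hankel_mat L N (\<lambda>n. z n \<omega>)) \<noteq> 0 \<and>
      1 / sigma_min (hankel_mat L N (\<lambda>n. z n \<omega>)) \<le> \<epsilon>} =
    space M - {\<omega> \<in> space M. \<exists>e\<in>{0..<1 / \<epsilon>\<^sup>2}. poly (char_poly (?B \<omega>)) e = 0}"
    using sigma_min_inverse_le_iff[OF hankel_mat_carrier assms]
      eigenvalues_mult_transpose_mat_self_ge_iff[OF hankel_mat_carrier]
    by auto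
  also have "\<dots> \<in> sets M"
  proof (intro sets.compl_sets sets_ex_root_atLeastLessThan)
    show "continuous_on UNIV (\<lambda>e. poly (char_poly (?B \<omega>)) e)" for \<omega>
      by (intro continuous_intros)
    show "(\<lambda>\<omega>. poly (char_poly (?B \<omega>)) e) \<in> borel_measurable M" for e
    proof (rule borel_measurable_poly_char_poly)
      show "?B \<omega> \<in> carrier_mat L L" for \<omega>
        using hankel_mat_carrier[of L N "\<lambda>n. z n \<omega>"] by simp
      show "(\<lambda>\<omega>. ?B \<omega> $$ (i, j)) \<in> borel_measurable M" if "i < L" "j < L" for i j
        using that by (simp add: index_hankel_mat_mult_transpose borel_measurable_hankel_gram)
    qed
  qed
  finally show ?thesis .
qed

lemma prob_hankel_sigma_min_event:
  fixes L N :: nat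
  assumes L: "0 < L"
  defines "S \<equiv> N - L + 1"
  shows "1 - 8 * real L ^ 4 / real S \<le> prob {\<omega> \<in> space M.
    sigma_min (hankel_mat L N (\<lambda>n. z n \<omega>)) \<noteq> 0 \<and>
    1 / sigma_min (hankel_mat L N (\<lambda>n. z n \<omega>)) \<le> sqrt (2 / real S)}"
proof -
  let ?t = "real S / (2 * real L)"
  have "0 < real S" by (simp add: S_def)
  then have "0 < ?t" using L by simp
  have "1 - 8 * real L ^ 4 / real S = 1 - (real L)\<^sup>2 * (2 * real S / ?t\<^sup>2)"
    using \<open>0 < real S\<close> L by (simp add: power2_eq_square power4_eq_xxxx field_simps)
  also have "\<dots> \<le> prob {\<omega> \<in> space M. \<forall>i<L. \<forall>k<L.
      \<bar>hankel_gram S (\<lambda>n. z n \<omega>) i k - real S * of_bool (i = k)\<bar> < ?t}"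
    by (rule prob_hankel_gram_near_scalar[OF \<open>0 < ?t\<close>])
  also have "\<dots> \<le> prob {\<omega> \<in> space M. sigma_min (hankel_mat L N (\<lambda>n. z n \<omega>)) \<noteq> 0 \<and>
      1 / sigma_min (hankel_mat L N (\<lambda>n. z n \<omega>)) \<le> sqrt (2 / real S)}"
    using hankel_sigma_min_inverse_le_if_gram_near[OF \<open>0 < L\<close>]
      sets_hankel_sigma_min_event[OF \<open>0 < L\<close>, of "sqrt (2 / real S)" N]
    by (intro finite_measure_mono) (auto simp: S_def less_imp_le)
  finally show ?thesis .
qed

end

theorem theorem4:
  fixes M :: "'a measure" and z :: "nat \<Rightarrow> 'a \<Rightarrow> real" and L :: nat
  assumes "prob_space M"
    and "prob_space.indep_vars M (\<lambda>_. borel) z UNIV"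
    and "\<And>i. distributed M lborel (z i) std_normal_density"
    and "L \<ge> 1"
  shows "\<exists>\<epsilon> :: nat \<Rightarrow> real. (\<forall>N. \<epsilon> N > 0) \<and> \<epsilon> \<longlonglongrightarrow> 0 \<and>
    (\<lambda>N. measure M {\<omega> \<in> space M.
        sigma_min (hankel_mat L N (\<lambda>k. z k \<omega>)) \<noteq> 0 \<and>
        1 / sigma_min (hankel_mat L N (\<lambda>k. z k \<omega>)) \<le> \<epsilon> N}) \<longlonglongrightarrow> 1"
proof -
  interpret iid_std_normal M z
    using assms(1-3) by (simp add: iid_std_normal_def iid_std_normal_axioms_def)
  have L: "0 < L" using assms(4) by simp
  define \<epsilon> where "\<epsilon> N = sqrt (2 / real (N - L + 1))" for N
  let ?P = "\<lambda>N. prob {\<omega> \<in> space M. sigma_min (hankel_mat L N (\<lambda>k. z k \<omega>)) \<noteq> 0 \<and>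
    1 / sigma_min (hankel_mat L N (\<lambda>k. z k \<omega>)) \<le> \<epsilon> N}"
  have "\<epsilon> \<longlonglongrightarrow> 0"
    by (rule LIMSEQ_offset[where k = L]) (simp add: \<epsilon>_def, real_asymp)
  have lower_lim: "(\<lambda>N. 1 - 8 * real L ^ 4 / real (N - L + 1)) \<longlonglongrightarrow> 1"
    by (rule LIMSEQ_offset[where k = L]) (simp, real_asymp)
  have "?P \<longlonglongrightarrow> 1"
  proof (rule tendsto_sandwich[OF always_eventually always_eventually lower_lim tendsto_const])
    show "\<forall>N. 1 - 8 * real L ^ 4 / real (N - L + 1) \<le> ?P N"
      unfolding \<epsilon>_def using prob_hankel_sigma_min_event[OF L] by blast
    show "\<forall>N. ?P N \<le> 1" by simp
  qed
  moreover have "\<forall>N. \<epsilon> N > 0" by (simp add: \<epsilon>_def)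
  ultimately show ?thesis using \<open>\<epsilon> \<longlonglongrightarrow> 0\<close> by blast
qed

end
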